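(* Let $R_1,R_2$ be commutative multiplicative hyperrings with identity having the zero absorbing property, and let $f:R_1\to R_2$ be a good homomorphism. Let $I_1,I_2$ be hyperideals of $R_1,R_2$ respectively. Let $\alpha_1$ be a good endomorphism of $R_1$ and $\alpha_2$ a good endomorphism of $R_2$ with $\alpha_2(f(r))=f(\alpha_1(r))$ for all $r\in R_1$. Then: (1) $f\big(\sqrt[\alpha_1]{I_1}\big)\subseteq\sqrt[\alpha_2]{f(I_1)}$; (2) $\sqrt[\alpha_1]{f^{-1}(I_2)}\subseteq f^{-1}\big(\sqrt[\alpha_2]{I_2}\big)$; (3) if $f$ is an isomorphism, then $f\big(\sqrt[\alpha_1]{I_1}\big)=\sqrt[\alpha_2]{f(I_1)}$.
   Context: A multiplicative hyperring is an abelian group $(R,+)$ with a hyperoperation $\circ:R\times R\to \mathcal P^*(R)$ (nonempty subsets) such that $a\circ(b\circ c)=(a\circ b)\circ c$, $a\circ(b+c)\subseteq a\circ b+a\circ c$, $(b+c)\circ a\subseteq b\circ a+c\circ a$, and $a\circ(-b)=(-a)\circ b=-(a\circ b)$. Products of subsets are unions of elementwise products, and $x^n=x\circ\cdots\circ x$ ($n$ factors). Commutative means $a\circ b=b\circ a$. An identity $1$ satisfies $a\in1\circ a$ for all $a$. $R$ has the zero absorbing property if $0\circ r=r\circ0=\{0\}$ for all $r$. A hyperideal is a nonempty $I$ closed under subtraction with $r\circ x\subseteq I$ for $r\in R$, $x\in I$. Standing assumption: all hyperideals are $\mathbf C$-hyperideals, i.e. for every finite product $A=r_1\circ\cdots\circ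 r_n$, $A\cap I\ne\emptyset$ implies $A\subseteq I$. A good homomorphism $f$ satisfies $f(x+y)=f(x)+f(y)$ and $f(x\circ y)=f(x)\circ f(y)$; a good endomorphism is a good homomorphism $R\to R$; maps are applied to sets elementwise. For a good endomorphism $\alpha$ and subset $J$, the $\alpha$-radical is $\sqrt[\alpha]{J}=\{r:\alpha(r^n)\subseteq J\text{ for some }n\in\mathbb N\}$. *)

theory Defs
  imports Main
begin

text \<open>A multiplicative hyperring: the additive abelian group is the type itself
(class ab_group_add); the hyperoperation is a map into subsets.\<close>

definition hset_prod :: "('a \<Rightarrow> 'a \<Rightarrow> 'a set) \<Rightarrow> 'a set \<Rightarrow> 'a set \<Rightarrow> 'a set" where
  "hset_prod m A B = (\<Union>a\<in>A. \<Union>b\<in>B. m a b)"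

definition hset_add :: "'a::plus set \<Rightarrow> 'a set \<Rightarrow> 'a set" where
  "hset_add A B = {a + b | a b. a \<in> A \<and> b \<in> B}"

definition mult_hyperring :: "('a::ab_group_add \<Rightarrow> 'a \<Rightarrow> 'a set) \<Rightarrow> bool" where
  "mult_hyperring m \<longleftrightarrow>
     (\<forall>a b. m a b \<noteq> {}) \<and>
     (\<forall>a b c. hset_prod m {a} (m b c) = hset_prod m (m a b) {c}) \<and>
     (\<forall>a b c. m a (b + c) \<subseteq> hset_add (m a b) (m a c)) \<and>
     (\<forall>a b c. m (b + c) a \<subseteq> hset_add (m b a) (m c a)) \<and>
     (\<forall>a b. m a (- b) = uminus ` (m a b) \<and> m (- a) b = uminus ` (m a b))"

definition hcomm :: "('a \<Rightarrow> 'a \<Rightarrow> 'a set) \<Rightarrow> bool" where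
  "hcomm m \<longleftrightarrow> (\<forall>a b. m a b = m b a)"

definition has_hidentity :: "('a \<Rightarrow> 'a \<Rightarrow> 'a set) \<Rightarrow> bool" where
  "has_hidentity m \<longleftrightarrow> (\<exists>e. \<forall>a. a \<in> m e a)"

definition zero_absorbing :: "('a::zero \<Rightarrow> 'a \<Rightarrow> 'a set) \<Rightarrow> bool" where
  "zero_absorbing m \<longleftrightarrow> (\<forall>r. m 0 r = {0} \<and> m r 0 = {0})"

text \<open>Hyperpower x^n = x \<circ> ... \<circ> x (n factors); only used for n \<ge> 1.\<close>
fun hpow :: "('a \<Rightarrow> 'a \<Rightarrow> 'a set) \<Rightarrow> 'a \<Rightarrow> nat \<Rightarrow> 'a set" where
  "hpow m x 0 = {x}"
| "hpow m x (Suc 0) = {x}"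
| "hpow m x (Suc (Suc n)) = hset_prod m (hpow m x (Suc n)) {x}"

fun hprod_list :: "('a \<Rightarrow> 'a \<Rightarrow> 'a set) \<Rightarrow> 'a list \<Rightarrow> 'a set" where
  "hprod_list m [] = {}"
| "hprod_list m [r] = {r}"
| "hprod_list m (r # s # rs) = hset_prod m {r} (hprod_list m (s # rs))"

definition hyperideal :: "('a::ab_group_add \<Rightarrow> 'a \<Rightarrow> 'a set) \<Rightarrow> 'a set \<Rightarrow> bool" where
  "hyperideal m I \<longleftrightarrow> I \<noteq> {} \<and> (\<forall>x\<in>I. \<forall>y\<in>I. x - y \<in> I) \<and>
     (\<forall>r. \<forall>x\<in>I. m r x \<subseteq> I)"

definition C_hyperideal :: "('a \<Rightarrow> 'a \<Rightarrow> 'a set) \<Rightarrow> 'a set \<Rightarrow> bool" where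
  "C_hyperideal m I \<longleftrightarrow>
     (\<forall>rs. rs \<noteq> [] \<longrightarrow> hprod_list m rs \<inter> I \<noteq> {} \<longrightarrow> hprod_list m rs \<subseteq> I)"

definition good_hom :: "('a::plus \<Rightarrow> 'a \<Rightarrow> 'a set) \<Rightarrow> ('b::plus \<Rightarrow> 'b \<Rightarrow> 'b set) \<Rightarrow> ('a \<Rightarrow> 'b) \<Rightarrow> bool" where
  "good_hom m1 m2 f \<longleftrightarrow> (\<forall>x y. f (x + y) = f x + f y \<and> f ` (m1 x y) = m2 (f x) (f y))"

definition good_endo :: "('a::plus \<Rightarrow> 'a \<Rightarrow> 'a set) \<Rightarrow> ('a \<Rightarrow> 'a) \<Rightarrow> bool" where
  "good_endo m \<alpha> \<longleftrightarrow> good_hom m m \<alpha>"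

definition alpha_rad :: "('a \<Rightarrow> 'a \<Rightarrow> 'a set) \<Rightarrow> ('a \<Rightarrow> 'a) \<Rightarrow> 'a set \<Rightarrow> 'a set" where
  "alpha_rad m \<alpha> J = {r. \<exists>n\<ge>1. \<alpha> ` (hpow m r n) \<subseteq> J}"

end

theory Submission
  imports Defs
begin

text \<open>A good homomorphism f maps hyperpowers onto hyperpowers, f(r^n) = f(r)^n, and
  intertwines \<alpha>1 with \<alpha>2, so \<alpha>2(f(r)^n) = f(\<alpha>1(r^n)). Hence f(r) lies in the
  \<alpha>2-radical of J exactly when r lies in the \<alpha>1-radical of the preimage of J: taking
  radicals commutes with preimages. All three claims follow from this by set algebra with
  images and preimages. None of the hyperring axioms, identities, zero absorption or
  (C-)hyperideal hypotheses are needed.\<close>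

lemma image_hset_prod:
  assumes "good_hom m1 m2 f"
  shows "f ` hset_prod m1 A B = hset_prod m2 (f ` A) (f ` B)"
  using assms unfolding hset_prod_def good_hom_def by (auto simp: image_UN)

lemma image_hpow:
  assumes "good_hom m1 m2 f"
  shows "f ` hpow m1 r n = hpow m2 (f r) n"
proof -
  have "f ` hpow m1 r (Suc k) = hpow m2 (f r) (Suc k)" for k
  proof (induction k)
    case (Suc k)
    then show ?case
      using image_hset_prod[OF assms, of "hpow m1 r (Suc k)" "{r}"] by simp
  qed simp
  then show ?thesis
    by (cases n) auto
qed

lemma alpha_rad_mono:
  assumes "J \<subseteq> K"
  shows "alpha_rad m \<alpha> J \<subseteq> alpha_rad m \<alpha> K"
  using assms unfolding alpha_rad_def by blast

lemma alpha_rad_vimage: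
  assumes "good_hom m1 m2 f" and "\<And>r. \<alpha>2 (f r) = f (\<alpha>1 r)"
  shows "alpha_rad m1 \<alpha>1 (f -` J) = f -` alpha_rad m2 \<alpha>2 J"
proof -
  have "\<alpha>2 ` hpow m2 (f r) n = f ` \<alpha>1 ` hpow m1 r n" for r n
    by (simp flip: image_hpow[OF assms(1)] add: image_image assms(2))
  then have "\<alpha>2 ` hpow m2 (f r) n \<subseteq> J \<longleftrightarrow> \<alpha>1 ` hpow m1 r n \<subseteq> f -` J" for r n
    by (simp add: image_subset_iff_subset_vimage)
  then show ?thesis
    unfolding alpha_rad_def by simp
qed

lemma image_alpha_rad_subset:
  assumes "good_hom m1 m2 f" and "\<And>r. \<alpha>2 (f r) = f (\<alpha>1 r)"
  shows "f ` alpha_rad m1 \<alpha>1 I \<subseteq> alpha_rad m2 \<alpha>2 (f ` I)"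
proof -
  have "f ` alpha_rad m1 \<alpha>1 I \<subseteq> f ` alpha_rad m1 \<alpha>1 (f -` f ` I)"
    by (intro image_mono alpha_rad_mono) blast
  also have "\<dots> = f ` f -` alpha_rad m2 \<alpha>2 (f ` I)"
    by (simp add: alpha_rad_vimage[of m1 m2 f \<alpha>2 \<alpha>1, OF assms])
  also have "\<dots> \<subseteq> alpha_rad m2 \<alpha>2 (f ` I)"
    by (rule image_vimage_subset)
  finally show ?thesis .
qed

lemma bij_image_alpha_rad:
  assumes "good_hom m1 m2 f" and "\<And>r. \<alpha>2 (f r) = f (\<alpha>1 r)" and "bij f"
  shows "f ` alpha_rad m1 \<alpha>1 I = alpha_rad m2 \<alpha>2 (f ` I)"
proof -
  have "f ` alpha_rad m1 \<alpha>1 I = f ` alpha_rad m1 \<alpha>1 (f -` f ` I)"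
    using \<open>bij f\<close> by (simp add: bij_is_inj inj_vimage_image_eq)
  also have "\<dots> = f ` f -` alpha_rad m2 \<alpha>2 (f ` I)"
    by (simp add: alpha_rad_vimage[of m1 m2 f \<alpha>2 \<alpha>1, OF assms(1,2)])
  also have "\<dots> = alpha_rad m2 \<alpha>2 (f ` I)"
    using \<open>bij f\<close> by (simp add: bij_is_surj surj_image_vimage_eq)
  finally show ?thesis .
qed

theorem mainTheorem15:
  fixes m1 :: "'a::ab_group_add \<Rightarrow> 'a \<Rightarrow> 'a set"
    and m2 :: "'b::ab_group_add \<Rightarrow> 'b \<Rightarrow> 'b set"
    and f :: "'a \<Rightarrow> 'b" and \<alpha>1 :: "'a \<Rightarrow> 'a" and \<alpha>2 :: "'b \<Rightarrow> 'b"
    and I1 :: "'a set" and I2 :: "'b set"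
  assumes R1: "mult_hyperring m1" "hcomm m1" "has_hidentity m1" "zero_absorbing m1"
    and R2: "mult_hyperring m2" "hcomm m2" "has_hidentity m2" "zero_absorbing m2"
    and hf: "good_hom m1 m2 f"
    and hI1: "hyperideal m1 I1" "C_hyperideal m1 I1"
    and hI2: "hyperideal m2 I2" "C_hyperideal m2 I2"
    and ha1: "good_endo m1 \<alpha>1" and ha2: "good_endo m2 \<alpha>2"
    and comm: "\<And>r. \<alpha>2 (f r) = f (\<alpha>1 r)"
  shows "f ` alpha_rad m1 \<alpha>1 I1 \<subseteq> alpha_rad m2 \<alpha>2 (f ` I1)
    \<and> alpha_rad m1 \<alpha>1 (f -` I2) \<subseteq> f -` alpha_rad m2 \<alpha>2 I2
    \<and> (bij f \<longrightarrow> f ` alpha_rad m1 \<alpha>1 I1 = alpha_rad m2 \<alpha>2 (f ` I1))"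
  using image_alpha_rad_subset[of m1 m2 f \<alpha>2 \<alpha>1, OF hf comm]
    alpha_rad_vimage[of m1 m2 f \<alpha>2 \<alpha>1, OF hf comm]
    bij_image_alpha_rad[of m1 m2 f \<alpha>2 \<alpha>1, OF hf comm]
  by blast

end
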